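(* Let $B\subseteq\mathbb{N}$ have positive upper density. Then there exist a unary function $f\in\mathscr{C}_{I_{\bar d=0}}$ and a strictly increasing sequence $(n_i)_{i\ge1}$ of natural numbers such that $f[B]\supseteq\bigcup_{i\ge1}[n_i,2n_i)$.
   Context: $\mathbb{N}=\{0,1,2,\dots\}$. For $A\subseteq\mathbb{N}$, $\bar d(A)=\limsup_{n\to\infty}\frac{|A\cap[0,n)|}{n}$. $\mathscr{C}_{I_{\bar d=0}}$ is the set of all finitary functions $f:\mathbb{N}^k\to\mathbb{N}$ ($k\ge1$) such that $\bar d(f[A^k])=0$ whenever $\bar d(A)=0$. Intervals are intervals of natural numbers. *)

theory Defs
  imports "HOL-Analysis.Analysis" "HOL-Library.Liminf_Limsup"
begin

definition upper_density :: "nat set \<Rightarrow> ereal" where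
  "upper_density A = limsup (\<lambda>n. ereal (real (card (A \<inter> {0..<n})) / real n))"

text \<open>A k-ary finitary function is represented as f :: nat list => nat, applied to lists
of length k. The clone C_{I_{d=0}}: f[A^k] has upper density 0 whenever A has.\<close>
definition tuples :: "nat \<Rightarrow> nat set \<Rightarrow> nat list set" where
  "tuples k A = {xs. length xs = k \<and> set xs \<subseteq> A}"

definition in_C_Id0 :: "nat \<Rightarrow> (nat list \<Rightarrow> nat) \<Rightarrow> bool" where
  "in_C_Id0 k f \<longleftrightarrow> k \<ge> 1 \<and>
     (\<forall>A. upper_density A = 0 \<longrightarrow> upper_density (f ` tuples k A) = 0)"

definition unary_fn :: "(nat \<Rightarrow> nat) \<Rightarrow> nat list \<Rightarrow> nat" where
  "unary_fn f xs = f (hd xs)"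

end

theory Submission
  imports Defs
begin

text \<open>Write \<open>S(x) = |B \<inter> [0,x)|\<close>. If \<open>B\<close> has upper density above \<open>d > 0\<close>, then for infinitely
  many \<open>v\<close> the counting function \<open>S\<close> passes \<open>2v\<close> at some \<open>m = O(v/d)\<close>; these \<open>v\<close> form the
  sequence \<open>n\<close>. Let \<open>f(x) = S(x)\<close> for \<open>x \<in> B\<close> with \<open>S(x) \<in> [v,2v)\<close> for such a \<open>v\<close>, and \<open>f(x) = 0\<close>
  otherwise. Since \<open>S\<close> increases by steps of one on \<open>B\<close>, \<open>f[B]\<close> covers each \<open>[v,2v)\<close>. Whenever
  \<open>f(x) \<noteq> 0\<close> we have \<open>x < K f(x)\<close> for a constant \<open>K\<close>, so \<open>|f[A] \<inter> [0,N)| \<le> 1 + |A \<inter> [0,KN)|\<close>,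
  and \<open>f\<close> maps sets of upper density zero to sets of upper density zero.\<close>

lemma upper_density_eq_0_iff:
  "upper_density A = 0 \<longleftrightarrow> (\<lambda>n. real (card (A \<inter> {0..<n})) / real n) \<longlonglongrightarrow> 0"
  (is "_ \<longleftrightarrow> ?r \<longlonglongrightarrow> 0")
proof
  assume A: "upper_density A = 0"
  show "?r \<longlonglongrightarrow> 0"
  proof (rule order_tendstoI)
    fix a :: real assume "a < 0"
    then show "\<forall>\<^sub>F n in sequentially. a < ?r n"
      by (intro always_eventually allI) (smt (verit) divide_nonneg_nonneg of_nat_0_le_iff)
  next
    fix a :: real assume "0 < a"
    then have "limsup (\<lambda>n. ereal (?r n)) < ereal a"
      using A unfolding upper_density_def by simp
    from Limsup_lessD[OF this] show "\<forall>\<^sub>F n in sequentially. ?r n < a"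
      by simp
  qed
next
  assume "?r \<longlonglongrightarrow> 0"
  then have "(\<lambda>n. ereal (?r n)) \<longlonglongrightarrow> ereal 0"
    by (rule tendsto_ereal)
  then have "limsup (\<lambda>n. ereal (?r n)) = ereal 0"
    by (rule lim_imp_Limsup[OF trivial_limit_sequentially])
  then show "upper_density A = 0"
    unfolding upper_density_def by (simp add: zero_ereal_def)
qed

lemma upper_density_zero_if_card_le:
  assumes A: "upper_density A = 0" and K: "0 < K"
    and le: "\<And>N. card (C \<inter> {0..<N}) \<le> c + card (A \<inter> {0..<K * N})"
  shows "upper_density C = 0"
proof -
  define r where "r N = real (card (A \<inter> {0..<N})) / real N" for N
  have "r \<longlonglongrightarrow> 0"
    using A unfolding r_def upper_density_eq_0_iff .
  moreover have "strict_mono (\<lambda>N. K * N)"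
    using K by (simp add: strict_mono_def)
  ultimately have "(\<lambda>N. r (K * N)) \<longlonglongrightarrow> 0"
    using LIMSEQ_subseq_LIMSEQ by (auto simp: comp_def)
  then have "(\<lambda>N. real c * (1 / real N) + real K * r (K * N)) \<longlonglongrightarrow> real c * 0 + real K * 0"
    by (intro tendsto_add tendsto_mult tendsto_const lim_1_over_n)
  then have bound: "(\<lambda>N. real c * (1 / real N) + real K * r (K * N)) \<longlonglongrightarrow> 0"
    by simp
  have "real (card (C \<inter> {0..<N})) / real N \<le> real c * (1 / real N) + real K * r (K * N)"
    if "N \<ge> 1" for N
  proof -
    have "real K * r (K * N) = real (card (A \<inter> {0..<K * N})) / real N"
      unfolding r_def using K that by (simp add: field_simps)
    moreover have "real (card (C \<inter> {0..<N})) \<le> real c + real (card (A \<inter> {0..<K * N}))"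
      using le[of N] by linarith
    ultimately show ?thesis
      using that by (simp add: divide_right_mono flip: add_divide_distrib)
  qed
  then have "\<forall>\<^sub>F N in sequentially.
      real (card (C \<inter> {0..<N})) / real N \<le> real c * (1 / real N) + real K * r (K * N)"
    unfolding eventually_sequentially by blast
  then show ?thesis
    unfolding upper_density_eq_0_iff by (intro tendsto_sandwich[OF _ _ tendsto_const bound]) auto
qed

lemma upper_density_image_eq_0:
  fixes g :: "nat \<Rightarrow> nat"
  assumes A: "upper_density A = 0" and K: "0 < K"
    and lipschitz: "\<And>x. x \<in> A \<Longrightarrow> g x \<noteq> 0 \<Longrightarrow> x < K * g x"
  shows "upper_density (g ` A) = 0"
proof (rule upper_density_zero_if_card_le[OF A K])
  fix N
  have "g ` A \<inter> {0..<N} \<subseteq> insert 0 (g ` (A \<inter> {0..<K * N}))"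
  proof
    fix y assume "y \<in> g ` A \<inter> {0..<N}"
    then obtain x where "x \<in> A" "y = g x" "y < N" by auto
    moreover have "x < K * N" if "y \<noteq> 0"
      using lipschitz[of x] that calculation K by (meson less_le_trans mult_le_mono2 nat_less_le)
    ultimately show "y \<in> insert 0 (g ` (A \<inter> {0..<K * N}))"
      by (cases "y = 0") auto
  qed
  then have "card (g ` A \<inter> {0..<N}) \<le> card (insert 0 (g ` (A \<inter> {0..<K * N})))"
    by (intro card_mono) auto
  also have "\<dots> \<le> 1 + card (A \<inter> {0..<K * N})"
    using card_image_le[of "A \<inter> {0..<K * N}" g] by (simp add: card_insert_if)
  finally show "card (g ` A \<inter> {0..<N}) \<le> 1 + card (A \<inter> {0..<K * N})" .
qed

definition count_below :: "nat set \<Rightarrow> nat \<Rightarrow> nat" where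
  "count_below B x = card (B \<inter> {0..<x})"

lemma count_below_mono: "x \<le> y \<Longrightarrow> count_below B x \<le> count_below B y"
  unfolding count_below_def by (intro card_mono) auto

lemma count_below_Suc:
  "count_below B (Suc x) = (if x \<in> B then Suc (count_below B x) else count_below B x)"
proof -
  have "B \<inter> {0..<Suc x} = (if x \<in> B then insert x (B \<inter> {0..<x}) else B \<inter> {0..<x})"
    by (auto simp: less_Suc_eq)
  then show ?thesis
    unfolding count_below_def by auto
qed

lemma count_below_attains:
  assumes "y < count_below B m"
  shows "\<exists>x\<in>B. x < m \<and> count_below B x = y"
  using assms
proof (induction m)
  case 0
  then show ?case by (simp add: count_below_def)
next
  case (Suc m)
  show ?case
  proof (cases "m \<in> B \<and> count_below B m = y")
    case True
    then show ?thesis by auto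
  next
    case False
    then have "y < count_below B m"
      using Suc.prems by (auto simp: count_below_Suc split: if_splits)
    then show ?thesis
      using Suc.IH less_SucI by blast
  qed
qed

lemma count_below_gt_often:
  assumes "ereal d < upper_density B"
  shows "\<exists>m\<ge>N. d * real m < real (count_below B m)"
proof (rule ccontr)
  assume "\<not> ?thesis"
  then have "\<forall>\<^sub>F m in sequentially. ereal (real (card (B \<inter> {0..<m})) / real m) \<le> ereal d"
    unfolding count_below_def eventually_sequentially
    by (auto simp: not_less intro!: exI[of _ "Suc N"] divide_le_eq[THEN iffD2])
  then have "upper_density B \<le> ereal d"
    unfolding upper_density_def by (intro Limsup_bounded) auto
  with assms show False by simp
qed

lemma infinite_scales:
  assumes "upper_density B > 0"
  obtains K :: nat where "0 < K" "infinite {v. \<exists>m. 2 * v \<le> count_below B m \<and> m \<le> K * v}"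
proof -
  obtain d :: real where d: "0 < ereal d" "ereal d < upper_density B"
    using ereal_dense2[OF assms] by blast
  have "0 < d" using d by simp
  define K :: nat where "K = nat \<lceil>4 / d\<rceil>"
  have "4 / d \<le> real K" and "0 < K"
    using \<open>0 < d\<close> unfolding K_def by (linarith, simp)
  moreover have "infinite {v. \<exists>m. 2 * v \<le> count_below B m \<and> m \<le> K * v}"
    unfolding infinite_nat_iff_unbounded_le
  proof
    fix M
    obtain N :: nat where N: "(2 * real M + 2) / d \<le> real N"
      using real_arch_simple by blast
    obtain m where m: "N \<le> m" "d * real m < real (count_below B m)"
      using count_below_gt_often[OF d(2)] by blast
    have "2 * real M + 2 \<le> d * real N"
      using N \<open>0 < d\<close> by (simp add: field_simps)
    also have "\<dots> \<le> d * real m"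
      using m(1) \<open>0 < d\<close> by simp
    finally have large: "2 * real M + 2 \<le> d * real m" .
    define v where "v = count_below B m div 2"
    have v: "2 * v \<le> count_below B m" "real (count_below B m) \<le> 2 * real v + 1"
      unfolding v_def by linarith+
    have "d * real m \<le> 4 * real v"
      using m(2) large v(2) by linarith
    then have "real m \<le> 4 / d * real v"
      using \<open>0 < d\<close> by (simp add: field_simps)
    also have "\<dots> \<le> real K * real v"
      using \<open>4 / d \<le> real K\<close> by (intro mult_right_mono) auto
    finally have "m \<le> K * v"
      by (metis of_nat_le_iff of_nat_mult)
    moreover have "M \<le> v"
      using m(2) large v(2) by linarith
    ultimately show "\<exists>v\<ge>M. v \<in> {v. \<exists>m. 2 * v \<le> count_below B m \<and> m \<le> K * v}"
      using v(1) by blast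
  qed
  ultimately show ?thesis using that by blast
qed

lemma counting_cover:
  assumes scales: "\<And>v. v \<in> V \<Longrightarrow> \<exists>m. 2 * v \<le> count_below B m \<and> m \<le> K * v"
  obtains f :: "nat \<Rightarrow> nat"
  where "(\<Union>v\<in>V. {v..<2 * v}) \<subseteq> f ` B" "\<And>x. f x \<noteq> 0 \<Longrightarrow> x < K * f x"
proof
  define f where "f x = (if x \<in> B \<and> (\<exists>v\<in>V. v \<le> count_below B x \<and> count_below B x < 2 * v)
    then count_below B x else 0)" for x
  show "(\<Union>v\<in>V. {v..<2 * v}) \<subseteq> f ` B"
  proof
    fix y assume "y \<in> (\<Union>v\<in>V. {v..<2 * v})"
    then obtain v where v: "v \<in> V" "v \<le> y" "y < 2 * v" by auto
    obtain m where "2 * v \<le> count_below B m"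
      using scales[OF v(1)] by blast
    then obtain x where x: "x \<in> B" "count_below B x = y"
      using count_below_attains[of y B m] v(3) by auto
    then have "f x = y"
      unfolding f_def using v by auto
    then show "y \<in> f ` B" using x by blast
  qed
  fix x assume "f x \<noteq> 0"
  then obtain v where v: "v \<in> V" "v \<le> count_below B x" "count_below B x < 2 * v"
    and fx: "f x = count_below B x"
    unfolding f_def by (auto split: if_splits)
  obtain m where m: "2 * v \<le> count_below B m" "m \<le> K * v"
    using scales[OF v(1)] by blast
  have "x < m"
    using count_below_mono[of m x B] v(3) m(1) by linarith
  also have "\<dots> \<le> K * f x"
    using m(2) v(2) fx by (metis le_trans mult_le_mono2)
  finally show "x < K * f x" .
qed

lemma in_C_Id0_unary_fn_iff:
  "in_C_Id0 1 (unary_fn f) \<longleftrightarrow> (\<forall>A. upper_density A = 0 \<longrightarrow> upper_density (f ` A) = 0)"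
proof -
  have "tuples 1 A = (\<lambda>a. [a]) ` A" for A
    unfolding tuples_def by (auto simp: length_Suc_conv)
  then have "unary_fn f ` tuples 1 A = f ` A" for A
    by (simp add: image_image unary_fn_def)
  then show ?thesis
    unfolding in_C_Id0_def by simp
qed

theorem mainTheorem10:
  fixes B :: "nat set"
  assumes "upper_density B > 0"
  shows "\<exists>(f::nat \<Rightarrow> nat) (n::nat \<Rightarrow> nat). in_C_Id0 1 (unary_fn f) \<and> strict_mono n \<and>
           (\<Union>i. {n i..<2 * n i}) \<subseteq> f ` B"
proof -
  obtain K where K: "0 < K" and infV: "infinite {v. \<exists>m. 2 * v \<le> count_below B m \<and> m \<le> K * v}"
    (is "infinite ?V")
    using infinite_scales[OF assms] by blast
  obtain f where cover: "(\<Union>v\<in>?V. {v..<2 * v}) \<subseteq> f ` B"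
    and lipschitz: "\<And>x. f x \<noteq> 0 \<Longrightarrow> x < K * f x"
    using counting_cover[of ?V B K] by blast
  define n where "n = enumerate ?V"
  have "strict_mono n"
    unfolding n_def using infV by (rule strict_mono_enumerate)
  moreover have "(\<Union>i. {n i..<2 * n i}) \<subseteq> f ` B"
    using cover enumerate_in_set[OF infV] unfolding n_def by blast
  moreover have "in_C_Id0 1 (unary_fn f)"
    unfolding in_C_Id0_unary_fn_iff using upper_density_image_eq_0[OF _ K lipschitz] by blast
  ultimately show ?thesis by blast
qed

end
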